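(* Let $g$ satisfy Assumption B, let $L>0$ with $1/L>s_0$, and let $u,z\in\mathbb{R}$ with $u\in\mathcal{G}_L(z)$. Then: if $u>0$, $u\ge\max\big(\sigma(1/L),\ \tfrac{Lq_0(1/L)-z}{L}\big)$; if $u<0$, $u\le\min\big(-\sigma(1/L),\ -\tfrac{Lq_0(1/L)+z}{L}\big)$; if $u=0$, $|z|\le Lq_0(1/L)$. Here $\sigma(1/L)>0$ and $q_0(1/L)>0$.
   Context: Assumption B on $g:\mathbb{R}\to\mathbb{R}\cup\{+\infty\}$: (B1) lsc, symmetric, $g(0)=0$; (B2) $g(u)<\infty$ for some $u\ne0$; (B3) one of (B3a) $g$ twice differentiable on some $(0,\epsilon)$, $\limsup_{u\searrow0}g''(u)\in(-\infty,0)$; (B3b) same differentiability, $\lim_{u\searrow0}g''(u)=-\infty$; (B3c) $\liminf_{u\searrow0}g(u)>0$; (B4) $g\ge0$. $\operatorname{prox}_{sg}(q):=\operatorname{argmin}_{u\in\mathbb{R}}(\tfrac12|u-q|^2+sg(u))$. $s_0:=0$ if (B3b) or (B3c) holds, otherwise $s_0:=-1/\limsup_{u\searrow0}g''(u)$. For $s>0$: $\sigma(s):=\inf\{|u|:\ u\ne0,\ u\in\operatorname{prox}_{sg}(q)\text{ for some }q\}$ and $q_0(s):=\sup\{q\ge0:\ q|u|\le\tfrac12u^2+sg(u)\ \forall u\in\mathbb{R}\}$. The set-valued map $\mathcal{G}_L:\mathbb{R}\rightrightarrows\mathbb{R}$ is defined by: $u\in\mathcal{G}_L(z)$ iff $u$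 is a global minimizer of $v\mapsto -zv+\frac L2(v-u)^2+g(v)$ over $v\in\mathbb{R}$. *)

theory Defs
  imports "HOL-Analysis.Analysis"
begin

text \<open>Extended-real-valued functions g : real => real \<union> {+\<infinity>} are modelled as
  functions real \<Rightarrow> ereal that never take the value -\<infinity>.\<close>

definition lsc_fun :: "(real \<Rightarrow> ereal) \<Rightarrow> bool" where
  "lsc_fun g \<longleftrightarrow> (\<forall>x. g x \<le> Liminf (at x) g)"

definition greal :: "(real \<Rightarrow> ereal) \<Rightarrow> real \<Rightarrow> real" where
  "greal g = (\<lambda>u. real_of_ereal (g u))"

definition g2 :: "(real \<Rightarrow> ereal) \<Rightarrow> real \<Rightarrow> real" where
  "g2 g = deriv (deriv (greal g))"

definition twice_diff_right0 :: "(real \<Rightarrow> ereal) \<Rightarrow> bool" where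
  "twice_diff_right0 g \<longleftrightarrow> (\<exists>eps>0. \<forall>x\<in>{0<..<eps}.
      g x \<noteq> \<infinity> \<and> g x \<noteq> -\<infinity> \<and>
      (greal g has_real_derivative deriv (greal g) x) (at x) \<and>
      (deriv (greal g) has_real_derivative g2 g x) (at x))"

definition B3a :: "(real \<Rightarrow> ereal) \<Rightarrow> bool" where
  "B3a g \<longleftrightarrow> twice_diff_right0 g \<and>
     Limsup (at_right 0) (\<lambda>u. ereal (g2 g u)) > -\<infinity> \<and>
     Limsup (at_right 0) (\<lambda>u. ereal (g2 g u)) < 0"

definition B3b :: "(real \<Rightarrow> ereal) \<Rightarrow> bool" where
  "B3b g \<longleftrightarrow> twice_diff_right0 g \<and>
     ((\<lambda>u. ereal (g2 g u)) \<longlongrightarrow> -\<infinity>) (at_right 0)"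

definition B3c :: "(real \<Rightarrow> ereal) \<Rightarrow> bool" where
  "B3c g \<longleftrightarrow> Liminf (at_right 0) g > 0"

definition assumptionB :: "(real \<Rightarrow> ereal) \<Rightarrow> bool" where
  "assumptionB g \<longleftrightarrow>
     (\<forall>u. g u \<noteq> -\<infinity>) \<and>
     lsc_fun g \<and> (\<forall>u. g (-u) = g u) \<and> g 0 = 0 \<and>
     (\<exists>u. u \<noteq> 0 \<and> g u < \<infinity>) \<and>
     (B3a g \<or> B3b g \<or> B3c g) \<and>
     (\<forall>u. g u \<ge> 0)"

definition s0 :: "(real \<Rightarrow> ereal) \<Rightarrow> real" where
  "s0 g = (if B3b g \<or> B3c g then 0
           else - 1 / real_of_ereal (Limsup (at_right 0) (\<lambda>u. ereal (g2 g u))))"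

definition prox :: "(real \<Rightarrow> ereal) \<Rightarrow> real \<Rightarrow> real \<Rightarrow> real set" where
  "prox g s q = {u. \<forall>v. ereal ((1/2) * \<bar>u - q\<bar>^2) + ereal s * g u
                          \<le> ereal ((1/2) * \<bar>v - q\<bar>^2) + ereal s * g v}"

definition sigma :: "(real \<Rightarrow> ereal) \<Rightarrow> real \<Rightarrow> real" where
  "sigma g s = Inf {\<bar>u\<bar> | u. u \<noteq> 0 \<and> (\<exists>q. u \<in> prox g s q)}"

definition q0 :: "(real \<Rightarrow> ereal) \<Rightarrow> real \<Rightarrow> real" where
  "q0 g s = Sup {q. q \<ge> 0 \<and> (\<forall>u. ereal (q * \<bar>u\<bar>) \<le> ereal ((1/2) * u^2) + ereal s * g u)}"

text \<open>u \<in> G_L(z) iff u globally minimizes v \<mapsto> -z v + L/2 (v-u)^2 + g v\<close>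
definition GL :: "(real \<Rightarrow> ereal) \<Rightarrow> real \<Rightarrow> real \<Rightarrow> real set" where
  "GL g L z = {u. \<forall>v. ereal (- z * u + L / 2 * (u - u)^2) + g u
                        \<le> ereal (- z * v + L / 2 * (v - u)^2) + g v}"

end

theory Submission
  imports Defs
begin

text \<open>A point u of G_L(z) is a proximal point of s g with s = 1/L, namely
  u \<in> prox_{sg}(u + z/L). Comparing a proximal point u of parameter q with the competitor 0
  gives q u \<ge> u^2/2 + s g(u), so for u > 0 every slope q' with q' |v| \<le> v^2/2 + s g(v)
  is at most q; as q0(s) is the supremum of these slopes, q0(s) \<le> q. Symmetry of g handles u < 0,
  and 0 \<in> prox_{sg}(q) makes |q| itself such a slope.

  Positivity of sigma(s) and q0(s) is a statement about g near 0. Either g is bounded away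
  from 0 there (B3c), or s > s0 makes 1 + s g'' negative near 0, so that the prox objective
  v \<mapsto> (v - q)^2/2 + s g(v) is strictly concave on some (0, \<epsilon>) and cannot attain its minimum
  there; concavity also yields the slope \<epsilon>/4. That sigma(s) is not an infimum over the empty
  set follows from the existence of proximal points (the prox objective is lower
  semicontinuous and coercive) and the boundedness of the slopes.\<close>

section \<open>Existence of proximal points\<close>

lemma lsc_closed_sublevel:
  fixes f :: "'a::topological_space \<Rightarrow> ereal"
  assumes "\<And>x. f x \<le> Liminf (at x) f"
  shows "closed {x. f x \<le> c}"
  unfolding closed_limpt
proof safe
  fix x assume "x islimpt {x. f x \<le> c}"
  then have frequently: "\<not> eventually (\<lambda>y. \<not> f y \<le> c) (at x)"
    by (simp add: islimpt_iff_eventually)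
  show "f x \<le> c"
  proof (rule ccontr)
    assume "\<not> f x \<le> c"
    then have "c < Liminf (at x) f" using assms[of x] by auto
    then have "eventually (\<lambda>y. c < f y) (at x)"
      by (rule less_LiminfD)
    then have "eventually (\<lambda>y. \<not> f y \<le> c) (at x)"
      by (rule eventually_mono) auto
    with frequently show False ..
  qed
qed

lemma lsc_attains_min:
  fixes f :: "'a::heine_borel \<Rightarrow> ereal"
  assumes lsc: "\<And>x. f x \<le> Liminf (at x) f"
    and bounded: "\<And>c. bounded {x. f x \<le> ereal c}"
  obtains x where "\<And>y. f x \<le> f y"
proof -
  define m where "m = (INF x. f x)"
  let ?F = "{{x. f x \<le> ereal c} | c. m < ereal c}"
  have "\<Inter>?F \<noteq> {}"
  proof (rule compact_chain)
    show "compact S" if "S \<in> ?F" for S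
      using that lsc_closed_sublevel[OF lsc] bounded by (auto simp: compact_eq_bounded_closed)
    show "{} \<notin> ?F"
    proof
      assume "{} \<in> ?F"
      then obtain c where "m < ereal c" and "{x. f x \<le> ereal c} = {}"
        by auto
      then show False
        unfolding m_def INF_less_iff by (auto dest: less_imp_le)
    qed
    show "S \<subseteq> T \<or> T \<subseteq> S" if "S \<in> ?F \<and> T \<in> ?F" for S T
      using that by (auto intro: order_trans simp: le_cases)
  qed
  then obtain x where x: "x \<in> \<Inter>?F" by blast
  have "f x \<le> m"
  proof (rule ccontr)
    assume "\<not> f x \<le> m"
    then obtain c where "m < ereal c" and c: "ereal c < f x"
      using ereal_dense2 by (meson not_le)
    with x have "f x \<le> ereal c"
      by blast
    with c show False
      by simp
  qed
  then show thesis
    using that by (metis INF_lower UNIV_I m_def order_trans)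
qed

lemma lsc_prox_objective:
  assumes "lsc_fun g" and "\<And>x. g x \<ge> 0" and "s \<ge> 0"
  shows "ereal ((1/2) * \<bar>x - q\<bar>^2) + ereal s * g x
     \<le> Liminf (at x) (\<lambda>v. ereal ((1/2) * \<bar>v - q\<bar>^2) + ereal s * g v)"
proof -
  have "((\<lambda>v. ereal ((1/2) * \<bar>v - q\<bar>^2)) \<longlongrightarrow> ereal ((1/2) * \<bar>x - q\<bar>^2)) (at x)"
    by (intro tendsto_intros)
  then have quadratic: "Liminf (at x) (\<lambda>v. ereal ((1/2) * \<bar>v - q\<bar>^2)) = ereal ((1/2) * \<bar>x - q\<bar>^2)"
    by (intro lim_imp_Liminf) simp_all
  have "ereal s * g x \<le> ereal s * Liminf (at x) g"
    using assms(1,3) unfolding lsc_fun_def by (intro ereal_mult_left_mono) auto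
  also have "\<dots> = Liminf (at x) (\<lambda>v. ereal s * g v)"
    using assms(3) by (intro Liminf_ereal_mult_left[symmetric]) simp_all
  finally have "ereal ((1/2) * \<bar>x - q\<bar>^2) + ereal s * g x
      \<le> Liminf (at x) (\<lambda>v. ereal ((1/2) * \<bar>v - q\<bar>^2)) + Liminf (at x) (\<lambda>v. ereal s * g v)"
    unfolding quadratic by (rule add_left_mono)
  also have "\<dots> \<le> Liminf (at x) (\<lambda>v. ereal ((1/2) * \<bar>v - q\<bar>^2) + ereal s * g v)"
    using assms(2,3) by (intro Liminf_add_le) (auto intro!: always_eventually)
  finally show ?thesis .
qed

lemma prox_nonempty:
  assumes "lsc_fun g" and "\<And>x. g x \<ge> 0" and "s > 0"
  obtains u where "u \<in> prox g s q"
proof -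
  define f where "f v = ereal ((1/2) * \<bar>v - q\<bar>^2) + ereal s * g v" for v
  have "bounded {v. f v \<le> ereal c}" for c
  proof (rule bounded_subset[OF bounded_cball], safe)
    fix v assume "f v \<le> ereal c"
    moreover have "ereal ((1/2) * \<bar>v - q\<bar>^2) \<le> f v"
      using assms(2,3) unfolding f_def by (simp add: add_increasing2)
    ultimately have "ereal ((1/2) * \<bar>v - q\<bar>^2) \<le> ereal c"
      by (rule order_trans[rotated])
    then have "\<bar>v - q\<bar>^2 \<le> 2 * c"
      by simp
    then show "v \<in> cball q (sqrt (2 * c))"
      by (simp add: dist_real_def real_le_rsqrt abs_minus_commute)
  qed
  moreover have "f x \<le> Liminf (at x) f" for x
    using lsc_prox_objective[OF assms(1,2)] assms(3) unfolding f_def by simp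
  ultimately obtain u where "\<And>v. f u \<le> f v"
    using lsc_attains_min by blast
  then show thesis
    using that unfolding prox_def f_def by blast
qed

lemma prox_uminus:
  assumes "u \<in> prox g s q" and "\<And>v. g (-v) = g v"
  shows "-u \<in> prox g s (-q)"
  unfolding prox_def
proof safe
  fix v
  have "ereal ((1/2) * \<bar>u - q\<bar>^2) + ereal s * g u
        \<le> ereal ((1/2) * \<bar>-v - q\<bar>^2) + ereal s * g (-v)"
    using assms(1) unfolding prox_def by blast
  moreover have "\<bar>-u - -q\<bar> = \<bar>u - q\<bar>" "\<bar>v - -q\<bar> = \<bar>-v - q\<bar>" by linarith+
  ultimately show "ereal ((1/2) * \<bar>-u - -q\<bar>^2) + ereal s * g (-u)
        \<le> ereal ((1/2) * \<bar>v - -q\<bar>^2) + ereal s * g v"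
    using assms(2)[of u] assms(2)[of v] by simp
qed

lemma prox_le_linear:
  assumes "u \<in> prox g s q" and "g 0 = 0" and "s > 0" and "\<And>x. g x \<ge> 0"
  shows "g u = ereal (greal g u)" and "(1/2) * u^2 + s * greal g u \<le> q * u"
proof -
  have le: "ereal ((1/2) * \<bar>u - q\<bar>^2) + ereal s * g u
            \<le> ereal ((1/2) * \<bar>0 - q\<bar>^2) + ereal s * g 0"
    using assms(1) unfolding prox_def by blast
  then show fin: "g u = ereal (greal g u)"
    using assms(2,3) assms(4)[of u] by (cases "g u") (auto simp: greal_def)
  from le have "(1/2) * (u - q)^2 + s * greal g u \<le> (1/2) * q^2"
    using assms(2) by (subst (asm) fin) simp
  then show "(1/2) * u^2 + s * greal g u \<le> q * u"
    by (simp add: power2_eq_square algebra_simps)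
qed

lemma GL_imp_prox:
  assumes "u \<in> GL g L z" and "L > 0" and "\<And>x. g x \<ge> 0"
  shows "u \<in> prox g (1/L) (u + z/L)"
  unfolding prox_def
proof safe
  fix v
  define c where "c = z * u / L + (1/2) * (z/L)^2"
  \<comment> \<open>up to the factor 1/L and an additive constant, the objective defining G_L
    is the prox objective at u + z/L\<close>
  have eq: "ereal ((1/2) * \<bar>x - (u + z/L)\<bar>^2) + ereal (1/L) * g x
      = ereal c + ereal (1/L) * (ereal (- z * x + L / 2 * (x - u)^2) + g x)" for x
    using assms(2) assms(3)[of x] unfolding c_def
    by (cases "g x") (auto simp: field_simps power2_eq_square)
  have "ereal (- z * u + L / 2 * (u - u)^2) + g u \<le> ereal (- z * v + L / 2 * (v - u)^2) + g v"
    using assms(1) unfolding GL_def by blast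
  then show "ereal ((1/2) * \<bar>u - (u + z/L)\<bar>^2) + ereal (1/L) * g u
      \<le> ereal ((1/2) * \<bar>v - (u + z/L)\<bar>^2) + ereal (1/L) * g v"
    unfolding eq using assms(2) by (intro add_left_mono ereal_mult_left_mono) auto
qed

section \<open>Minorant slopes, q0 and sigma\<close>

definition minorant_slopes :: "(real \<Rightarrow> ereal) \<Rightarrow> real \<Rightarrow> real set" where
  "minorant_slopes g s =
     {q. q \<ge> 0 \<and> (\<forall>u. ereal (q * \<bar>u\<bar>) \<le> ereal ((1/2) * u^2) + ereal s * g u)}"

lemma q0_eq_Sup_minorant_slopes: "q0 g s = Sup (minorant_slopes g s)"
  by (simp add: q0_def minorant_slopes_def)

lemma zero_in_minorant_slopes:
  assumes "\<And>x. g x \<ge> 0" and "s \<ge> 0"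
  shows "0 \<in> minorant_slopes g s"
proof -
  have "ereal (0 * \<bar>u\<bar>) \<le> ereal ((1/2) * u^2) + ereal s * g u" for u
    using assms by (simp add: zero_ereal_def[symmetric] add_nonneg_nonneg)
  then show ?thesis
    unfolding minorant_slopes_def by simp
qed

text \<open>Since greal g v = 0 where g v = \<infinity>, minorant conditions stated with greal carry a
  finiteness guard.\<close>

lemma minorant_slopesI:
  assumes "q \<ge> 0" and "s > 0" and "\<And>x. g x \<ge> 0" and "g 0 = 0" and "\<And>x. g (-x) = g x"
    and "\<And>v. v > 0 \<Longrightarrow> g v \<noteq> \<infinity> \<Longrightarrow> q * v \<le> (1/2) * v^2 + s * greal g v"
  shows "q \<in> minorant_slopes g s"
proof -
  have pos: "ereal (q * \<bar>v\<bar>) \<le> ereal ((1/2) * v^2) + ereal s * g v" if "v > 0" for v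
    using assms(2) assms(3)[of v] assms(6)[of v] that by (cases "g v") (auto simp: greal_def)
  have "ereal (q * \<bar>v\<bar>) \<le> ereal ((1/2) * v^2) + ereal s * g v" for v
    using pos[of v] pos[of "-v"] assms(4) assms(5)[of v] by (cases v "0::real" rule: linorder_cases) auto
  then show ?thesis
    using assms(1) unfolding minorant_slopes_def by blast
qed

lemma minorant_slopes_le:
  assumes "q \<in> minorant_slopes g s" and "w \<noteq> 0" and "g w = ereal c"
  shows "q \<le> ((1/2) * w^2 + s * c) / \<bar>w\<bar>"
proof -
  have "ereal (q * \<bar>w\<bar>) \<le> ereal ((1/2) * w^2) + ereal s * g w"
    using assms(1) unfolding minorant_slopes_def by blast
  then show ?thesis
    using assms(2,3) by (simp add: field_simps)
qed

lemma bdd_above_minorant_slopes: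
  assumes "w \<noteq> 0" and "g w \<noteq> \<infinity>" and "g w \<noteq> -\<infinity>"
  shows "bdd_above (minorant_slopes g s)"
proof -
  obtain c where "g w = ereal c"
    using assms(2,3) by (cases "g w") auto
  then have "q \<le> ((1/2) * w^2 + s * c) / \<bar>w\<bar>" if "q \<in> minorant_slopes g s" for q
    using minorant_slopes_le[of q g s w c] that assms(1) by blast
  then show ?thesis
    by (rule bdd_aboveI)
qed

lemma minorant_slopes_le_prox_param:
  assumes "q' \<in> minorant_slopes g s" and "0 < u" and "u \<in> prox g s q"
    and "g 0 = 0" and "s > 0" and "\<And>x. g x \<ge> 0"
  shows "q' \<le> q"
proof -
  have "ereal (q' * \<bar>u\<bar>) \<le> ereal ((1/2) * u^2) + ereal s * g u"
    using assms(1) unfolding minorant_slopes_def by blast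
  then have "q' * u \<le> (1/2) * u^2 + s * greal g u"
    using assms(2) by (subst (asm) prox_le_linear(1)[OF assms(3-6)]) simp
  also have "\<dots> \<le> q * u"
    by (rule prox_le_linear(2)[OF assms(3-6)])
  finally show ?thesis
    using assms(2) by simp
qed

lemma abs_in_minorant_slopes_if_zero_in_prox:
  assumes "0 \<in> prox g s q" and "g 0 = 0" and "s > 0" and "\<And>x. g x \<ge> 0"
    and "\<And>x. g (-x) = g x"
  shows "\<bar>q\<bar> \<in> minorant_slopes g s"
proof (rule minorant_slopesI)
  fix v :: real
  assume "g v \<noteq> \<infinity>"
  then have fin: "g v = ereal (greal g v)"
    using assms(4)[of v] by (cases "g v") (auto simp: greal_def)
  have "ereal ((1/2) * \<bar>0 - q\<bar>^2) + ereal s * g 0 \<le> ereal ((1/2) * \<bar>x - q\<bar>^2) + ereal s * g x" for x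
    using assms(1) unfolding prox_def by blast
  from this[of v] this[of "-v"] have "(1/2) * q^2 \<le> (1/2) * (v - q)^2 + s * greal g v"
      "(1/2) * q^2 \<le> (1/2) * (-v - q)^2 + s * greal g v"
    using assms(2) assms(5)[of v] by (simp_all add: fin)
  then show "\<bar>q\<bar> * v \<le> (1/2) * v^2 + s * greal g v" if "v > 0"
    using that by (cases "q \<ge> 0") (simp_all add: power2_eq_square algebra_simps)
qed (use assms in auto)

lemma q0_le_prox_param:
  assumes "0 < u" and "u \<in> prox g s q" and "g 0 = 0" and "s > 0" and "\<And>x. g x \<ge> 0"
  shows "q0 g s \<le> q"
  unfolding q0_eq_Sup_minorant_slopes
proof (rule cSup_least)
  show "minorant_slopes g s \<noteq> {}"
    using zero_in_minorant_slopes[of g s] assms(4,5) by auto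
qed (use minorant_slopes_le_prox_param assms in blast)

lemma le_q0:
  assumes "q \<in> minorant_slopes g s" and "w \<noteq> 0" and "g w \<noteq> \<infinity>" and "g w \<noteq> -\<infinity>"
  shows "q \<le> q0 g s"
  unfolding q0_eq_Sup_minorant_slopes
  using assms by (intro cSup_upper bdd_above_minorant_slopes)

lemma sigma_le_abs:
  assumes "u \<in> prox g s q" and "u \<noteq> 0"
  shows "sigma g s \<le> \<bar>u\<bar>"
  unfolding sigma_def using assms by (intro cInf_lower bdd_belowI[of _ 0]) auto

lemma sigma_ge:
  assumes "u \<in> prox g s q" and "u \<noteq> 0"
    and "\<And>v p. v \<in> prox g s p \<Longrightarrow> v \<noteq> 0 \<Longrightarrow> \<delta> \<le> \<bar>v\<bar>"
  shows "\<delta> \<le> sigma g s"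
  unfolding sigma_def using assms by (intro cInf_greatest) auto

lemma sigma_q0_le_pos_prox:
  assumes "0 < u" and "u \<in> prox g s q" and "g 0 = 0" and "s > 0" and "\<And>x. g x \<ge> 0"
  shows "sigma g s \<le> u \<and> q0 g s \<le> q"
  using sigma_le_abs[OF assms(2)] q0_le_prox_param[OF assms] assms(1) by simp

lemma prox_nonzero_exists:
  assumes "lsc_fun g" and "\<And>x. g x \<ge> 0" and "g 0 = 0" and "\<And>x. g (-x) = g x" and "s > 0"
    and "w \<noteq> 0" and "g w \<noteq> \<infinity>"
  obtains u q where "u \<in> prox g s q" and "u \<noteq> 0"
proof -
  obtain B where B: "\<And>q. q \<in> minorant_slopes g s \<Longrightarrow> q \<le> B"
    using bdd_above_minorant_slopes[of w g s] assms(2)[of w] assms(6,7)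
    by (auto simp: bdd_above_def)
  obtain u where u: "u \<in> prox g s (\<bar>B\<bar> + 1)"
    using prox_nonempty[OF assms(1,2,5)] .
  have "u \<noteq> 0"
  proof
    assume "u = 0"
    then have "\<bar>\<bar>B\<bar> + 1\<bar> \<in> minorant_slopes g s"
      using u assms by (intro abs_in_minorant_slopes_if_zero_in_prox) auto
    then show False
      using B by fastforce
  qed
  with u that show thesis by blast
qed

section \<open>Functions with 1 + s g'' < 0 near the origin\<close>

lemma second_deriv_neg_imp_no_interior_min:
  fixes f f' f'' :: "real \<Rightarrow> real"
  assumes C: "open C" "convex C" "u \<in> C"
    and f': "\<And>x. x \<in> C \<Longrightarrow> (f has_real_derivative f' x) (at x)"
    and f'': "\<And>x. x \<in> C \<Longrightarrow> (f' has_real_derivative f'' x) (at x)"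
    and neg: "\<And>x. x \<in> C \<Longrightarrow> f'' x < 0"
    and min: "\<And>x. x \<in> C \<Longrightarrow> f u \<le> f x"
  shows False
proof -
  have nbhd: "\<exists>d>0. \<forall>y. \<bar>x - y\<bar> < d \<longrightarrow> y \<in> C" if x: "x \<in> C" for x
  proof -
    obtain d where "d > 0" and "ball x d \<subseteq> C"
      using C(1) x by (rule openE)
    then show ?thesis
      by (intro exI[of _ d]) (auto simp: dist_real_def subset_iff)
  qed
  \<comment> \<open>f is concave, so it lies below its tangent lines; the tangent at the minimiser u is
    horizontal, hence f is constant on C, which contradicts f'' u < 0\<close>
  have tangent: "f y \<le> f x + f' x * (y - x)" if "x \<in> C" "y \<in> C" for x y
  proof -
    have "(- f' x) * (y - x) \<le> (- f y) - (- f x)"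
      using C(2) that f' f'' neg
      by (intro f''_imp_f'[where f'' = "\<lambda>x. - f'' x"]) (auto intro: DERIV_minus less_imp_le)
    then show ?thesis
      by simp
  qed
  obtain d where "d > 0" and d: "\<And>y. \<bar>u - y\<bar> < d \<Longrightarrow> y \<in> C"
    using nbhd[OF C(3)] by blast
  have "f' u = 0"
    using DERIV_local_min[OF f'[OF C(3)] \<open>d > 0\<close>] d min by blast
  then have const: "f y = f u" if "y \<in> C" for y
    using tangent[OF C(3) that] min[OF that] by simp
  have "f' y = 0" if y: "y \<in> C" for y
  proof -
    obtain e where "e > 0" and "\<And>z. \<bar>y - z\<bar> < e \<Longrightarrow> z \<in> C"
      using nbhd[OF y] by blast
    with DERIV_local_const[OF f'[OF y]] const y show ?thesis
      by auto
  qed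
  then have "f'' u = 0"
    using DERIV_local_const[OF f''[OF C(3)] \<open>d > 0\<close>] d C(3) by auto
  with neg[OF C(3)] show False
    by simp
qed

lemma concave_nonneg_if_nonneg_at_ends:
  fixes k :: "real \<Rightarrow> real"
  assumes "concave_on {0<..b} k" and "0 \<le> k b" and "c \<ge> 0"
    and "\<And>x. 0 < x \<Longrightarrow> x \<le> b \<Longrightarrow> - (c * x) \<le> k x"
    and "0 < v" and "v \<le> b"
  shows "0 \<le> k v"
proof (rule field_le_epsilon)
  fix e :: real
  assume "e > 0"
  define x where "x = min v (e / (c + 1))"
  have x: "0 < x" "x \<le> v"
    using assms(3,5) \<open>e > 0\<close> by (auto simp: x_def)
  have "c * x \<le> c * (e / (c + 1))"
    using assms(3) by (intro mult_left_mono) (auto simp: x_def)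
  also have "\<dots> \<le> e"
    using assms(3) \<open>e > 0\<close> by (simp add: field_simps)
  finally have cx: "c * x \<le> e" .
  have "v \<in> closed_segment x b"
    using x assms(6) by (simp add: closed_segment_eq_real_ivl)
  then obtain t where t: "0 \<le> t" "t \<le> 1" and v: "v = (1 - t) * x + t * b"
    by (auto simp: in_segment)
  have "(1 - t) * k x + t * k b \<le> k v"
    using concave_onD[OF assms(1) t] x assms(5,6) unfolding v by simp
  moreover have "(1 - t) * - (c * x) \<le> (1 - t) * k x"
    using t assms(4)[of x] x assms(6) by (intro mult_left_mono) auto
  moreover have "- (c * x) \<le> (1 - t) * - (c * x)"
    using t x assms(3) by (simp add: algebra_simps)
  moreover have "0 \<le> t * k b"
    using t assms(2) by simp
  ultimately show "0 \<le> k v + e"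
    using cx by linarith
qed

definition prox_objective_concave_on :: "(real \<Rightarrow> ereal) \<Rightarrow> real \<Rightarrow> real \<Rightarrow> bool" where
  "prox_objective_concave_on g s \<epsilon> \<longleftrightarrow> (\<forall>x\<in>{0<..<\<epsilon>}. g x = ereal (greal g x)
     \<and> (greal g has_real_derivative deriv (greal g) x) (at x)
     \<and> (deriv (greal g) has_real_derivative g2 g x) (at x)
     \<and> 1 + s * g2 g x < 0)"

lemma concave_near_zeroE:
  assumes "twice_diff_right0 g" and "eventually (\<lambda>u. 1 + s * g2 g u < 0) (at_right 0)"
  obtains \<epsilon> where "\<epsilon> > 0" and "prox_objective_concave_on g s \<epsilon>"
proof -
  obtain e1 where "e1 > 0" and e1: "\<forall>x\<in>{0<..<e1}. g x \<noteq> \<infinity> \<and> g x \<noteq> -\<infinity>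
      \<and> (greal g has_real_derivative deriv (greal g) x) (at x)
      \<and> (deriv (greal g) has_real_derivative g2 g x) (at x)"
    using assms(1) unfolding twice_diff_right0_def by blast
  obtain e2 where "e2 > 0" and e2: "\<And>x. 0 < x \<Longrightarrow> x < e2 \<Longrightarrow> 1 + s * g2 g x < 0"
    using assms(2) unfolding eventually_at_right_field by auto
  have "g x = ereal (greal g x)" if "x \<in> {0<..<e1}" for x
    using e1 that by (cases "g x") (auto simp: greal_def)
  then have "prox_objective_concave_on g s (min e1 e2)"
    using e1 e2 unfolding prox_objective_concave_on_def by auto
  with \<open>e1 > 0\<close> \<open>e2 > 0\<close> show thesis
    using that[of "min e1 e2"] by simp
qed

lemma prox_gap_if_concave_near_zero:
  assumes "twice_diff_right0 g" and "eventually (\<lambda>u. 1 + s * g2 g u < 0) (at_right 0)"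
  shows "\<exists>\<delta>>0. \<forall>u q. 0 < u \<longrightarrow> u \<in> prox g s q \<longrightarrow> \<delta> \<le> u"
proof -
  obtain \<epsilon> where "\<epsilon> > 0" and \<epsilon>: "prox_objective_concave_on g s \<epsilon>"
    using concave_near_zeroE[OF assms] by blast
  have "\<epsilon> \<le> u" if "0 < u" and u: "u \<in> prox g s q" for u q
  proof (rule ccontr)
    assume "\<not> \<epsilon> \<le> u"
    \<comment> \<open>on (0, \<epsilon>) the prox objective is strictly concave, so it has no minimiser there\<close>
    show False
    proof (rule second_deriv_neg_imp_no_interior_min[where C = "{0<..<\<epsilon>}" and u = u
          and f = "\<lambda>v. (1/2) * (v - q)^2 + s * greal g v"
          and f' = "\<lambda>v. (v - q) + s * deriv (greal g) v" and f'' = "\<lambda>v. 1 + s * g2 g v"])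
      fix x :: real
      assume "x \<in> {0<..<\<epsilon>}"
      then have x: "g x = ereal (greal g x)"
        "(greal g has_real_derivative deriv (greal g) x) (at x)"
        "(deriv (greal g) has_real_derivative g2 g x) (at x)" "1 + s * g2 g x < 0"
        using \<epsilon> unfolding prox_objective_concave_on_def by auto
      then show "((\<lambda>v. (1/2) * (v - q)^2 + s * greal g v) has_real_derivative
          (x - q) + s * deriv (greal g) x) (at x)"
        "((\<lambda>v. (v - q) + s * deriv (greal g) v) has_real_derivative 1 + s * g2 g x) (at x)"
        "1 + s * g2 g x < 0"
        by (auto intro!: derivative_eq_intros)
      have "ereal ((1/2) * \<bar>u - q\<bar>^2) + ereal s * g u \<le> ereal ((1/2) * \<bar>x - q\<bar>^2) + ereal s * g x"
        using u unfolding prox_def by blast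
      moreover have "g u = ereal (greal g u)"
        using \<epsilon> \<open>0 < u\<close> \<open>\<not> \<epsilon> \<le> u\<close> unfolding prox_objective_concave_on_def by auto
      ultimately show "(1/2) * (u - q)^2 + s * greal g u \<le> (1/2) * (x - q)^2 + s * greal g x"
        using x(1) by simp
    qed (use \<open>0 < u\<close> \<open>\<not> \<epsilon> \<le> u\<close> in auto)
  qed
  with \<open>\<epsilon> > 0\<close> show ?thesis
    by blast
qed

lemma minorant_if_concave_near_zero:
  assumes "twice_diff_right0 g" and "eventually (\<lambda>u. 1 + s * g2 g u < 0) (at_right 0)"
    and "\<And>x. g x \<ge> 0" and "s \<ge> 0"
  shows "\<exists>q>0. \<forall>v>0. q * v \<le> (1/2) * v^2 + s * greal g v"
proof -
  obtain \<epsilon> where "\<epsilon> > 0" and \<epsilon>: "prox_objective_concave_on g s \<epsilon>"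
    using concave_near_zeroE[OF assms(1,2)] by blast
  have greal_nonneg: "0 \<le> s * greal g x" for x
    using assms(3)[of x] assms(4) by (simp add: greal_def real_of_ereal_pos)
  define k where "k x = (1/2) * x^2 + s * greal g x - (\<epsilon>/4) * x" for x
  have concave: "concave_on {0<..\<epsilon>/2} k"
  proof (rule f''_le0_imp_concave[where f' = "\<lambda>x. x + s * deriv (greal g) x - \<epsilon>/4"
        and f'' = "\<lambda>x. 1 + s * g2 g x"])
    fix x :: real
    assume "x \<in> {0<..\<epsilon>/2}"
    then have "(greal g has_real_derivative deriv (greal g) x) (at x)"
      and "(deriv (greal g) has_real_derivative g2 g x) (at x)" and "1 + s * g2 g x < 0"
      using \<epsilon> \<open>\<epsilon> > 0\<close> unfolding prox_objective_concave_on_def by auto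
    then show "(k has_real_derivative x + s * deriv (greal g) x - \<epsilon>/4) (at x)"
      "((\<lambda>x. x + s * deriv (greal g) x - \<epsilon>/4) has_real_derivative 1 + s * g2 g x) (at x)"
      "1 + s * g2 g x \<le> 0"
      unfolding k_def by (auto intro!: derivative_eq_intros)
  qed (simp add: convex_real_interval)
  have "0 \<le> k (\<epsilon>/2)"
    using greal_nonneg[of "\<epsilon>/2"] by (simp add: k_def power2_eq_square)
  moreover have "- ((\<epsilon>/4) * x) \<le> k x" if "0 < x" and "x \<le> \<epsilon>/2" for x
    using greal_nonneg[of x] by (simp add: k_def)
  ultimately have near_zero: "0 \<le> k v" if "0 < v" and "v \<le> \<epsilon>/2" for v
    using concave_nonneg_if_nonneg_at_ends[OF concave, of "\<epsilon>/4" v] that \<open>\<epsilon> > 0\<close> by simp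
  have "(\<epsilon>/4) * v \<le> (1/2) * v^2 + s * greal g v" if "v > 0" for v
  proof (cases "v \<le> \<epsilon>/2")
    case True
    then show ?thesis
      using near_zero[OF that] by (simp add: k_def)
  next
    case False
    then have "(\<epsilon>/4) * v \<le> (v/2) * v"
      using that by (intro mult_right_mono) auto
    then show ?thesis
      using greal_nonneg[of v] by (simp add: power2_eq_square)
  qed
  with \<open>\<epsilon> > 0\<close> show ?thesis
    by (intro exI[of _ "\<epsilon>/4"]) auto
qed

section \<open>Functions bounded away from zero near the origin\<close>

lemma B3cE:
  assumes "B3c g"
  obtains c \<epsilon> where "c > 0" and "\<epsilon> > 0" and "\<And>x. 0 < x \<Longrightarrow> x < \<epsilon> \<Longrightarrow> ereal c < g x"
proof -
  obtain c where "0 < ereal c" and "ereal c < Liminf (at_right 0) g"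
    using assms ereal_dense2 unfolding B3c_def by blast
  moreover from less_LiminfD[OF this(2)] obtain \<epsilon> where "\<epsilon> > 0"
    and "\<And>x. 0 < x \<Longrightarrow> x < \<epsilon> \<Longrightarrow> ereal c < g x"
    unfolding eventually_at_right_field by auto
  ultimately show thesis
    using that by simp
qed

lemma prox_param_le:
  assumes "u \<in> prox g s q" and "g 0 = 0" and "s > 0" and "\<And>x. g x \<ge> 0"
    and "0 \<le> u" and "u < w/2" and "g w = ereal G" and "q \<ge> 0"
  shows "q \<le> (w^2 + 2 * s * G) / w"
proof -
  have "ereal ((1/2) * \<bar>u - q\<bar>^2) + ereal s * g u \<le> ereal ((1/2) * \<bar>w - q\<bar>^2) + ereal s * g w"
    using assms(1) unfolding prox_def by blast
  then have "(1/2) * (u - q)^2 + s * greal g u \<le> (1/2) * (w - q)^2 + s * G"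
    using prox_le_linear(1)[OF assms(1-4)] assms(7) by simp
  moreover have "0 \<le> s * greal g u"
    using assms(3) assms(4)[of u] by (simp add: greal_def real_of_ereal_pos)
  moreover have "(1/2) * (u - q)^2 = (1/2) * u^2 - q * u + (1/2) * q^2"
    and "(1/2) * (w - q)^2 = (1/2) * w^2 - q * w + (1/2) * q^2"
    by (simp_all add: power2_eq_square algebra_simps)
  moreover have "q * w / 2 \<le> q * w - q * u"
    using mult_left_mono[of "w/2" "w - u" q] assms(6,8) by (simp add: right_diff_distrib)
  ultimately have "q * w \<le> w^2 + 2 * s * G"
    using zero_le_power2[of u] by linarith
  moreover have "w > 0"
    using assms(5,6) by linarith
  ultimately show ?thesis
    by (simp add: pos_le_divide_eq)
qed

lemma prox_gap_if_liminf_pos: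
  assumes "B3c g" and "\<And>x. g x \<ge> 0" and "g 0 = 0" and "s > 0"
    and "w > 0" and "g w = ereal G"
  shows "\<exists>\<delta>>0. \<forall>u q. 0 < u \<longrightarrow> u \<in> prox g s q \<longrightarrow> \<delta> \<le> u"
proof -
  obtain c \<epsilon> where "c > 0" and "\<epsilon> > 0" and c: "\<And>x. 0 < x \<Longrightarrow> x < \<epsilon> \<Longrightarrow> ereal c < g x"
    using B3cE[OF assms(1)] by blast
  define K where "K = (w^2 + 2 * s * G) / w"
  have "G \<ge> 0"
    using assms(2)[of w] assms(6) by simp
  then have "K > 0"
    using assms(4,5) by (simp add: K_def add_pos_nonneg)
  define \<delta> where "\<delta> = min \<epsilon> (min (w/2) (s * c / K))"
  have "\<delta> \<le> u" if "0 < u" and u: "u \<in> prox g s q" for u q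
  proof (rule ccontr)
    assume "\<not> \<delta> \<le> u"
    then have small: "u < \<epsilon>" "u < w/2" "u < s * c / K"
      by (auto simp: \<delta>_def)
    have fin: "g u = ereal (greal g u)" and lin: "(1/2) * u^2 + s * greal g u \<le> q * u"
      using prox_le_linear[OF u assms(3,4,2)] by blast+
    have "c < greal g u"
      using c[OF \<open>0 < u\<close> small(1)] fin by simp
    then have "s * c < s * greal g u"
      using assms(4) by simp
    with lin have "s * c \<le> q * u"
      using zero_le_power2[of u] by linarith
    moreover have "0 < s * c"
      using \<open>c > 0\<close> assms(4) by simp
    ultimately have "0 < q * u"
      by linarith
    then have "q > 0"
      using \<open>0 < u\<close> by (simp add: zero_less_mult_iff)
    then have "q \<le> K"
      unfolding K_def using prox_param_le[OF u assms(3,4,2) _ small(2) assms(6)] \<open>0 < u\<close> by simp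
    then have "q * u \<le> K * u"
      using \<open>0 < u\<close> by (simp add: mult_right_mono)
    with \<open>s * c \<le> q * u\<close> small(3) \<open>K > 0\<close> show False
      by (simp add: field_simps)
  qed
  moreover have "\<delta> > 0"
    using \<open>\<epsilon> > 0\<close> \<open>c > 0\<close> \<open>K > 0\<close> assms(4,5) by (simp add: \<delta>_def)
  ultimately show ?thesis
    by blast
qed

lemma minorant_if_liminf_pos:
  assumes "B3c g" and "\<And>x. g x \<ge> 0" and "s > 0"
  shows "\<exists>q>0. \<forall>v>0. g v \<noteq> \<infinity> \<longrightarrow> q * v \<le> (1/2) * v^2 + s * greal g v"
proof -
  obtain c \<epsilon> where "c > 0" and "\<epsilon> > 0" and c: "\<And>x. 0 < x \<Longrightarrow> x < \<epsilon> \<Longrightarrow> ereal c < g x"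
    using B3cE[OF assms(1)] by blast
  define q where "q = min (s * c / \<epsilon>) (\<epsilon>/2)"
  have "q * v \<le> (1/2) * v^2 + s * greal g v" if "v > 0" and "g v \<noteq> \<infinity>" for v
  proof (cases "v < \<epsilon>")
    case True
    then have "c < greal g v"
      using c[OF \<open>v > 0\<close>] that(2) by (cases "g v") (auto simp: greal_def)
    have "q * v \<le> (s * c / \<epsilon>) * \<epsilon>"
      using True \<open>v > 0\<close> \<open>c > 0\<close> assms(3)
      by (intro mult_mono) (auto simp: q_def)
    also have "\<dots> \<le> s * greal g v"
      using \<open>\<epsilon> > 0\<close> \<open>c < greal g v\<close> assms(3) by simp
    finally show ?thesis
      using zero_le_power2[of v] by linarith
  next
    case False
    moreover have "q \<le> \<epsilon>/2"
      unfolding q_def by (rule min.cobounded2)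
    ultimately have "q * v \<le> (v/2) * v"
      using \<open>v > 0\<close> by (intro mult_right_mono) auto
    moreover have "0 \<le> s * greal g v"
      using assms(2)[of v] assms(3) by (simp add: greal_def real_of_ereal_pos)
    ultimately show ?thesis
      by (simp add: power2_eq_square)
  qed
  moreover have "q > 0"
    using \<open>\<epsilon> > 0\<close> \<open>c > 0\<close> assms(3) by (simp add: q_def)
  ultimately show ?thesis
    by blast
qed

lemma assumptionB_cases:
  assumes "assumptionB g" and "s0 g < s"
  shows "B3c g \<or> twice_diff_right0 g \<and> eventually (\<lambda>u. 1 + s * g2 g u < 0) (at_right 0)"
proof -
  consider "B3c g" | "B3b g" | "B3a g" "\<not> B3b g" "\<not> B3c g"
    using assms(1) unfolding assumptionB_def by blast
  then show ?thesis
  proof cases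
    case 2
    then have "s > 0"
      using assms(2) by (simp add: s0_def)
    from 2 have "eventually (\<lambda>u. ereal (g2 g u) < ereal (-1/s)) (at_right 0)"
      unfolding B3b_def tendsto_MInfty by blast
    then have "eventually (\<lambda>u. 1 + s * g2 g u < 0) (at_right 0)"
      by (rule eventually_mono) (use \<open>s > 0\<close> in \<open>simp add: field_simps\<close>)
    with 2 show ?thesis
      unfolding B3b_def by blast
  next
    case 3
    define l where "l = Limsup (at_right 0) (\<lambda>u. ereal (g2 g u))"
    obtain r where r: "l = ereal r" and "r < 0"
      using 3 unfolding B3a_def l_def[symmetric] by (cases l) auto
    have "- 1 / r < s"
      using assms(2) 3 r by (simp add: s0_def l_def)
    moreover have "0 < - 1 / r"
      using \<open>r < 0\<close> by (simp add: zero_less_divide_iff)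
    ultimately have "s > 0"
      by linarith
    with \<open>- 1 / r < s\<close> \<open>r < 0\<close> have "r < -1/s"
      by (simp add: field_simps)
    then have "eventually (\<lambda>u. ereal (g2 g u) < ereal (-1/s)) (at_right 0)"
      using r unfolding l_def by (intro Limsup_lessD) simp
    then have "eventually (\<lambda>u. 1 + s * g2 g u < 0) (at_right 0)"
      by (rule eventually_mono) (use \<open>s > 0\<close> in \<open>simp add: field_simps\<close>)
    with 3 show ?thesis
      unfolding B3a_def by blast
  qed simp
qed

lemma assumptionB_D:
  assumes "assumptionB g"
  shows "lsc_fun g" and "\<And>x. g x \<ge> 0" and "g 0 = 0" and "\<And>x. g (-x) = g x"
  using assms unfolding assumptionB_def by auto

lemma assumptionB_finite_point:
  assumes "assumptionB g"
  obtains w G where "w > 0" and "g w = ereal G"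
proof -
  obtain v where "v \<noteq> 0" and "g v < \<infinity>"
    using assms unfolding assumptionB_def by blast
  moreover have "g \<bar>v\<bar> = g v"
    using assumptionB_D(4)[OF assms, of v] by (cases "v \<ge> 0") auto
  moreover have "g v \<ge> 0"
    by (rule assumptionB_D(2)[OF assms])
  ultimately show thesis
    using that[of "\<bar>v\<bar>"] by (cases "g v") auto
qed

lemma assumptionB_prox_gap:
  assumes "assumptionB g" and "s > 0" and "s0 g < s"
  shows "\<exists>\<delta>>0. \<forall>u q. 0 < u \<longrightarrow> u \<in> prox g s q \<longrightarrow> \<delta> \<le> u"
  using assumptionB_cases[OF assms(1,3)]
proof
  assume "B3c g"
  obtain w G where "w > 0" and "g w = ereal G"
    using assumptionB_finite_point[OF assms(1)] .
  then show ?thesis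
    by (rule prox_gap_if_liminf_pos[OF \<open>B3c g\<close> assumptionB_D(2,3)[OF assms(1)] assms(2)])
next
  assume "twice_diff_right0 g \<and> eventually (\<lambda>u. 1 + s * g2 g u < 0) (at_right 0)"
  then show ?thesis
    by (intro prox_gap_if_concave_near_zero) simp_all
qed

lemma assumptionB_minorant:
  assumes "assumptionB g" and "s > 0" and "s0 g < s"
  shows "\<exists>q>0. \<forall>v>0. g v \<noteq> \<infinity> \<longrightarrow> q * v \<le> (1/2) * v^2 + s * greal g v"
  using assumptionB_cases[OF assms(1,3)]
proof
  assume "B3c g"
  then show ?thesis
    using assumptionB_D(2)[OF assms(1)] assms(2) by (rule minorant_if_liminf_pos)
next
  assume "twice_diff_right0 g \<and> eventually (\<lambda>u. 1 + s * g2 g u < 0) (at_right 0)"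
  then have "\<exists>q>0. \<forall>v>0. q * v \<le> (1/2) * v^2 + s * greal g v"
    using assumptionB_D(2)[OF assms(1)] assms(2) by (intro minorant_if_concave_near_zero) auto
  then show ?thesis
    by blast
qed

lemma assumptionB_sigma_pos:
  assumes "assumptionB g" and "s > 0" and "s0 g < s"
  shows "0 < sigma g s"
proof -
  note g = assumptionB_D[OF assms(1)]
  obtain w G where "w > 0" and "g w = ereal G"
    using assumptionB_finite_point[OF assms(1)] .
  obtain \<delta> where "\<delta> > 0" and \<delta>: "\<And>u q. 0 < u \<Longrightarrow> u \<in> prox g s q \<Longrightarrow> \<delta> \<le> u"
    using assumptionB_prox_gap[OF assms] by blast
  have "w \<noteq> 0" and "g w \<noteq> \<infinity>"
    using \<open>w > 0\<close> \<open>g w = ereal G\<close> by simp_all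
  then obtain u q where "u \<in> prox g s q" and "u \<noteq> 0"
    by (rule prox_nonzero_exists[where g = g, OF g assms(2)])
  moreover have "\<delta> \<le> \<bar>u\<bar>" if u: "u \<in> prox g s q" and "u \<noteq> 0" for u q
  proof (cases "u > 0")
    case True
    then show ?thesis
      using \<delta>[OF True u] by simp
  next
    case False
    with \<open>u \<noteq> 0\<close> have "0 < -u"
      by simp
    then show ?thesis
      using \<delta>[OF _ prox_uminus[where g = g, OF u g(4)]] by simp
  qed
  ultimately have "\<delta> \<le> sigma g s"
    by (rule sigma_ge)
  with \<open>\<delta> > 0\<close> show ?thesis
    by simp
qed

lemma assumptionB_q0_pos:
  assumes "assumptionB g" and "s > 0" and "s0 g < s"
  shows "0 < q0 g s"
proof -
  note g = assumptionB_D[OF assms(1)]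
  obtain w G where "w > 0" and "g w = ereal G"
    using assumptionB_finite_point[OF assms(1)] .
  obtain q where "q > 0" and q: "\<forall>v>0. g v \<noteq> \<infinity> \<longrightarrow> q * v \<le> (1/2) * v^2 + s * greal g v"
    using assumptionB_minorant[OF assms] by blast
  have "q \<in> minorant_slopes g s"
    using \<open>q > 0\<close> assms(2) g(2-4) q by (intro minorant_slopesI) auto
  then have "q \<le> q0 g s"
    using \<open>w > 0\<close> \<open>g w = ereal G\<close> by (intro le_q0[of _ _ _ w]) auto
  with \<open>q > 0\<close> show ?thesis
    by simp
qed

lemma assumptionB_abs_le_q0:
  assumes "assumptionB g" and "s > 0" and "0 \<in> prox g s q"
  shows "\<bar>q\<bar> \<le> q0 g s"
proof -
  note g = assumptionB_D[OF assms(1)]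
  obtain w G where "w > 0" and "g w = ereal G"
    using assumptionB_finite_point[OF assms(1)] .
  then show ?thesis
    using abs_in_minorant_slopes_if_zero_in_prox[where g = g, OF assms(3) g(3) assms(2) g(2,4)]
    by (intro le_q0[of _ _ _ w]) auto
qed

theorem corollary4p7:
  fixes g :: "real \<Rightarrow> ereal" and L u z :: real
  assumes "assumptionB g"
    and "L > 0" and "1 / L > s0 g"
    and "u \<in> GL g L z"
  shows "(u > 0 \<longrightarrow> u \<ge> max (sigma g (1/L)) ((L * q0 g (1/L) - z) / L))
       \<and> (u < 0 \<longrightarrow> u \<le> min (- sigma g (1/L)) (- (L * q0 g (1/L) + z) / L))
       \<and> (u = 0 \<longrightarrow> \<bar>z\<bar> \<le> L * q0 g (1/L))
       \<and> sigma g (1/L) > 0 \<and> q0 g (1/L) > 0"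
proof -
  define s where "s = 1/L"
  note g = assumptionB_D[OF assms(1)]
  have "s > 0" and "s0 g < s"
    using assms(2,3) by (simp_all add: s_def)
  have u: "u \<in> prox g s (u + z/L)"
    unfolding s_def using assms(4,2) g(2) by (rule GL_imp_prox)
  have pos: "sigma g s \<le> v \<and> q0 g s \<le> q" if "0 < v" and "v \<in> prox g s q" for v q
    using sigma_q0_le_pos_prox[where g = g, OF that g(3) \<open>s > 0\<close> g(2)] .
  have "sigma g s \<le> u \<and> q0 g s \<le> u + z/L" if "u > 0"
    using pos[OF that u] .
  moreover have "sigma g s \<le> -u \<and> q0 g s \<le> -(u + z/L)" if "u < 0"
    using pos[OF _ prox_uminus[OF u g(4)]] that by simp
  moreover have "\<bar>z/L\<bar> \<le> q0 g s" if "u = 0"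
    using assumptionB_abs_le_q0[OF assms(1) \<open>s > 0\<close>, of "z/L"] u that by simp
  moreover have "0 < sigma g s" and "0 < q0 g s"
    using assumptionB_sigma_pos[OF assms(1) \<open>s > 0\<close> \<open>s0 g < s\<close>]
      assumptionB_q0_pos[OF assms(1) \<open>s > 0\<close> \<open>s0 g < s\<close>] by simp_all
  ultimately show ?thesis
    using assms(2) unfolding s_def by (auto simp: field_simps)
qed

end
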